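(* Let $X$ be an algebraic K3 surface of Picard number $9$ carrying an even set of eight disjoint smooth rational curves $N_1,\dots,N_8$, and let $N\subseteq NS(X)$ be the minimal primitive sublattice containing $N_1,\dots,N_8$ (it is generated by the $N_i$ and $\hat N=\frac12(N_1+\dots+N_8)$). Let $L$ be a generator of the orthogonal complement $N^{\perp}\subseteq NS(X)$ with $L^2>0$, let $d$ be the positive integer with $L^2=2d$, and put $\mathcal{L}_{2d}=\mathbb{Z}L\oplus N$. Then: (1) if $L^2\equiv 2 \pmod 4$, then $NS(X)=\mathcal{L}_{2d}$; (2) if $L^2\equiv 0\pmod 4$, then either $NS(X)=\mathcal{L}_{2d}$, or $NS(X)=\mathcal{L}'_{2d}$, where $\mathcal{L}'_{2d}$ is the lattice generated by $\mathcal{L}_{2d}$ and a class $\frac{L+v}{2}$ with $v\in N$ satisfying: $v^2\in 4\mathbb{Z}$; $v\cdot N_i\in 2\mathbb{Z}$ for all $i$, and $v/2\notin N$; and $L^2\equiv -v^2 \pmod 8$.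
   Context: All varieties are over $\mathbb{C}$. A set of disjoint smooth rational curves $N_1,\dots,N_m$ on a smooth surface $X$ is an even set if there exists $\delta\in \mathrm{Pic}(X)$ with $N_1+\dots+N_m\sim 2\delta$ (linear equivalence). The Nikulin lattice is the even negative definite lattice $N$ of rank $8$ generated by classes $N_1,\dots,N_8$ and $\hat N=\frac12\sum_{i=1}^8 N_i$, with bilinear form determined by $N_i\cdot N_j=-2\delta_{ij}$; for an even set of eight disjoint smooth rational curves on a K3 surface, the minimal primitive sublattice of $NS(X)$ containing them is isometric to this lattice. $NS(X)$ denotes the Néron–Severi lattice with its intersection form. *)

theory Defs
  imports "HOL-Analysis.Analysis" "HOL-Library.Numeral_Type"
begin

text \<open>Lattice-theoretic model: NS(X) is identified with int^9 (a free abelian group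
  of rank 9 = Picard number), the intersection form given by an integer Gram matrix G.\<close>

definition bform :: "int^'n^'n \<Rightarrow> int^'n \<Rightarrow> int^'n \<Rightarrow> int" where
  "bform G x y = (\<Sum>i\<in>UNIV. \<Sum>j\<in>UNIV. x$i * G$i$j * y$j)"

definition even_lattice_form :: "int^'n^'n \<Rightarrow> bool" where
  "even_lattice_form G \<longleftrightarrow> (\<forall>i j. G$i$j = G$j$i) \<and> (\<forall>i. even (G$i$i)) \<and> det G \<noteq> 0"

definition zspan :: "(('a::comm_ring_1)^'n) set \<Rightarrow> ('a^'n) set" where
  "zspan S = {x. \<exists>F c. finite F \<and> F \<subseteq> S \<and> x = (\<Sum>s\<in>F. c s *s s)}"

text \<open>Minimal primitive sublattice containing S (saturation of its span).\<close>
definition primitive_closure :: "(int^'n) set \<Rightarrow> (int^'n) set" where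
  "primitive_closure S = {x. \<exists>k::int. k \<noteq> 0 \<and> k *s x \<in> zspan S}"

definition orth_compl :: "int^'n^'n \<Rightarrow> (int^'n) set \<Rightarrow> (int^'n) set" where
  "orth_compl G A = {x. \<forall>y\<in>A. bform G x y = 0}"

end

theory Submission
  imports Defs
begin

text \<open>For x in the lattice let \<open>\<pi> x = - (\<Sum>i. (x \<cdot> N\<^sub>i) N\<^sub>i)\<close>, twice the orthogonal
  projection of x to the span of the curves. As \<open>N\<^sub>i\<^sup>2 = -2\<close>, the vector \<open>2x - \<pi> x\<close> is orthogonal
  to all curves, hence equals \<open>k L\<close> for an integer k. If k is always even, then
  \<open>x - (k/2) L\<close> lies in N, so the lattice is \<open>\<int>L \<oplus> N\<close>. Otherwise some x gives \<open>k = 2m + 1\<close> and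
  \<open>w = x - m L\<close> satisfies \<open>2w = L + v\<close> with \<open>v = \<pi> x\<close>. Then \<open>v\<^sup>2 = -2 \<Sum>i. (x \<cdot> N\<^sub>i)\<^sup>2\<close> is
  divisible by 4 because \<open>\<Sum>i. x \<cdot> N\<^sub>i = 2 (x \<cdot> \<delta>)\<close> is even, \<open>v/2 \<notin> N\<close> because L is not
  divisible by 2, and \<open>L\<^sup>2 + v\<^sup>2 = 4 w\<^sup>2 \<equiv> 0 (mod 8)\<close>; in particular \<open>4\<close> divides \<open>L\<^sup>2\<close>.\<close>

interpretation int_vec: module "vector_scalar_mult :: int \<Rightarrow> int^'n \<Rightarrow> int^'n"
  by unfold_locales simp_all

lemma zspan_eq_span: "zspan S = int_vec.span S"
  unfolding zspan_def int_vec.span_explicit by blast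

lemma bform_add_left: "bform G (x + y) z = bform G x z + bform G y z"
  unfolding bform_def by (simp add: algebra_simps sum.distrib)

lemma bform_add_right: "bform G z (x + y) = bform G z x + bform G z y"
  unfolding bform_def by (simp add: algebra_simps sum.distrib)

lemma bform_diff_left: "bform G (x - y) z = bform G x z - bform G y z"
  unfolding bform_def by (simp add: algebra_simps sum_subtractf)

lemma bform_uminus_left: "bform G (- x) z = - bform G x z"
  unfolding bform_def by (simp add: sum_negf)

lemma bform_scale_left: "bform G (c *s x) z = c * bform G x z"
  unfolding bform_def by (simp add: algebra_simps sum_distrib_left)

lemma bform_scale_right: "bform G z (c *s x) = c * bform G z x"
  unfolding bform_def by (simp add: algebra_simps sum_distrib_left)

lemma bform_zero_left [simp]: "bform G 0 z = 0"
  unfolding bform_def by simp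

lemma bform_zero_right [simp]: "bform G z 0 = 0"
  unfolding bform_def by simp

lemma bform_sum_left: "finite A \<Longrightarrow> bform G (\<Sum>i\<in>A. f i) z = (\<Sum>i\<in>A. bform G (f i) z)"
  by (induction A rule: finite_induct) (simp_all add: bform_add_left)

lemma bform_sum_right: "finite A \<Longrightarrow> bform G z (\<Sum>i\<in>A. f i) = (\<Sum>i\<in>A. bform G z (f i))"
  by (induction A rule: finite_induct) (simp_all add: bform_add_right)

lemma bform_commute:
  assumes "\<And>i j. G$i$j = G$j$i"
  shows "bform G x y = bform G y x"
  unfolding bform_def by (subst sum.swap) (simp add: assms mult_ac)

lemma even_sum_symmetric:
  fixes f :: "'a \<Rightarrow> 'a \<Rightarrow> int"
  assumes "finite A" and sym: "\<And>i j. f i j = f j i" and diag: "\<And>i. even (f i i)"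
  shows "even (\<Sum>i\<in>A. \<Sum>j\<in>A. f i j)"
  using assms(1)
proof (induction A rule: finite_induct)
  case empty
  then show ?case by simp
next
  case (insert a A)
  have "(\<Sum>i\<in>A. f i a) = (\<Sum>j\<in>A. f a j)"
    by (intro sum.cong refl) (rule sym)
  then have "(\<Sum>i\<in>insert a A. \<Sum>j\<in>insert a A. f i j)
      = f a a + 2 * (\<Sum>j\<in>A. f a j) + (\<Sum>i\<in>A. \<Sum>j\<in>A. f i j)"
    using insert by (simp add: sum.distrib)
  then show ?case using insert diag by simp
qed

lemma even_bform_self:
  assumes "\<And>i j. G$i$j = G$j$i" and "\<And>i. even (G$i$i)"
  shows "even (bform G x x)"
  unfolding bform_def by (rule even_sum_symmetric) (auto simp: assms mult_ac)

lemma orth_compl_zspan: "orth_compl G (zspan S) = orth_compl G S"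
proof
  show "orth_compl G (zspan S) \<subseteq> orth_compl G S"
    unfolding orth_compl_def zspan_eq_span using int_vec.span_base by blast
  show "orth_compl G S \<subseteq> orth_compl G (zspan S)"
    unfolding orth_compl_def zspan_def
    by (auto simp: bform_sum_right bform_scale_right subset_iff intro!: sum.neutral)
qed

lemma zspan_subset_primitive_closure: "zspan S \<subseteq> primitive_closure S"
  unfolding primitive_closure_def by (auto intro: exI[of _ 1])

lemma orth_compl_primitive_closure: "orth_compl G (primitive_closure S) = orth_compl G S"
proof
  have "S \<subseteq> primitive_closure S"
    using zspan_subset_primitive_closure int_vec.span_base by (force simp: zspan_eq_span)
  then show "orth_compl G (primitive_closure S) \<subseteq> orth_compl G S"
    unfolding orth_compl_def by blast
  show "orth_compl G S \<subseteq> orth_compl G (primitive_closure S)"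
  proof
    fix x
    assume "x \<in> orth_compl G S"
    then have x: "x \<in> orth_compl G (zspan S)"
      by (simp add: orth_compl_zspan)
    show "x \<in> orth_compl G (primitive_closure S)"
      unfolding orth_compl_def mem_Collect_eq
    proof
      fix y
      assume "y \<in> primitive_closure S"
      then obtain k where "k \<noteq> 0" and "k *s y \<in> zspan S"
        unfolding primitive_closure_def by blast
      with x have "bform G x (k *s y) = 0"
        unfolding orth_compl_def by blast
      with \<open>k \<noteq> 0\<close> show "bform G x y = 0"
        by (simp add: bform_scale_right)
    qed
  qed
qed

locale even_set_of_curves =
  fixes G :: "int^'n^'n" and N :: "'m::finite \<Rightarrow> int^'n" and L :: "int^'n"
  assumes symmetric: "\<And>i j. G$i$j = G$j$i"
    and even_diagonal: "\<And>i. even (G$i$i)"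
    and curves: "\<And>i j. bform G (N i) (N j) = (if i = j then -2 else 0)"
    and even_set: "\<exists>\<delta>. (\<Sum>i\<in>UNIV. N i) = 2 *s \<delta>"
    and orth_compl_curves: "orth_compl G (range N) = {k *s L | k. True}"
    and L_nonzero: "L \<noteq> 0"
begin

abbreviation P :: "(int^'n) set" where
  "P \<equiv> primitive_closure (range N)"

definition double_proj :: "int^'n \<Rightarrow> int^'n" where
  "double_proj x = - (\<Sum>i\<in>UNIV. bform G x (N i) *s N i)"

lemma orth_curves_imp_multiple_L:
  assumes "\<And>i. bform G z (N i) = 0"
  obtains k where "z = k *s L"
  using assms orth_compl_curves unfolding orth_compl_def by blast

lemma bform_L_P_eq_0:
  assumes "y \<in> P"
  shows "bform G L y = 0"
proof -
  have "L \<in> orth_compl G (range N)"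
    unfolding orth_compl_curves by (metis (mono_tags) mem_Collect_eq vector_smult_lid)
  then have "L \<in> orth_compl G P"
    by (simp only: orth_compl_primitive_closure)
  with assms show ?thesis
    unfolding orth_compl_def by blast
qed

lemma curve_in_P: "N i \<in> P"
  using zspan_subset_primitive_closure int_vec.span_base[of "N i" "range N"]
  by (auto simp: zspan_eq_span)

lemma double_proj_in_zspan: "double_proj x \<in> zspan (range N)"
  unfolding double_proj_def zspan_eq_span
  by (intro int_vec.span_neg int_vec.span_sum int_vec.span_scale int_vec.span_base) auto

lemma double_proj_in_P: "double_proj x \<in> P"
  using double_proj_in_zspan zspan_subset_primitive_closure by blast

lemma bform_double_proj_curve: "bform G (double_proj x) (N j) = 2 * bform G x (N j)"
proof -
  have "bform G (double_proj x) (N j)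
      = - (\<Sum>i\<in>UNIV. bform G x (N i) * (if i = j then -2 else 0))"
    unfolding double_proj_def
    by (simp add: bform_uminus_left bform_sum_left bform_scale_left curves)
  also have "\<dots> = 2 * bform G x (N j)"
    by (simp add: if_distrib[of "(*) _"] cong: if_cong)
  finally show ?thesis .
qed

lemma bform_double_proj_self:
  "bform G (double_proj x) (double_proj x) = -2 * (\<Sum>i\<in>UNIV. bform G x (N i) ^ 2)"
proof -
  have "bform G (double_proj x) (double_proj x)
      = - (\<Sum>i\<in>UNIV. bform G x (N i) * bform G (N i) (double_proj x))"
    by (simp add: double_proj_def[of x] bform_uminus_left bform_sum_left bform_scale_left)
  then show ?thesis
    by (simp add: bform_commute[OF symmetric, of "N _"] bform_double_proj_curve
        sum_distrib_left power2_eq_square mult_ac flip: sum_negf)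
qed

lemma four_dvd_bform_double_proj_self: "4 dvd bform G (double_proj x) (double_proj x)"
proof -
  obtain \<delta> where "(\<Sum>i\<in>UNIV. N i) = 2 *s \<delta>"
    using even_set by blast
  then have "even (\<Sum>i\<in>UNIV. bform G x (N i))"
    by (metis bform_scale_right bform_sum_right dvd_triv_left finite)
  moreover have "even (\<Sum>i\<in>UNIV. bform G x (N i) ^ 2 - bform G x (N i))"
    by (intro dvd_sum) (simp add: power2_eq_square)
  ultimately have "even (\<Sum>i\<in>UNIV. bform G x (N i) ^ 2)"
    by (simp add: sum_subtractf)
  then show ?thesis
    by (auto simp: bform_double_proj_self)
qed

lemma double_minus_double_proj_multiple_L:
  obtains k where "2 *s x - double_proj x = k *s L"
  by (rule orth_curves_imp_multiple_L[of "2 *s x - double_proj x"])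
    (auto simp: bform_diff_left bform_scale_left bform_double_proj_curve)

lemma L_not_double: "L \<noteq> 2 *s z"
proof
  assume L: "L = 2 *s z"
  have "bform G z (N i) = 0" for i
    using bform_L_P_eq_0[OF curve_in_P, of i] by (simp add: L bform_scale_left)
  then obtain k where "z = k *s L"
    by (rule orth_curves_imp_multiple_L)
  with L have "L = (2 * k) *s L"
    by simp
  then have "(1 - 2 * k) *s L = 0"
    by (simp add: vec_eq_iff algebra_simps)
  moreover have "1 - 2 * k \<noteq> 0"
    by presburger
  ultimately show False
    using L_nonzero by (simp only: vector_mul_eq_0) blast
qed

lemma in_zspan_L_P_if_double:
  assumes "2 *s z = (2 * m) *s L + u" and "u \<in> zspan (range N)"
  shows "z \<in> zspan (insert L P)"
proof -
  have "2 *s (z - m *s L) = u"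
    using assms(1) by simp
  then have "z - m *s L \<in> P"
    using assms(2) unfolding primitive_closure_def by (auto intro: exI[of _ 2])
  then have "m *s L + (z - m *s L) \<in> int_vec.span (insert L P)"
    by (intro int_vec.span_add int_vec.span_scale int_vec.span_base) auto
  then show ?thesis
    by (simp add: zspan_eq_span)
qed

lemma in_zspan_L_P_if_even:
  assumes "2 *s x - double_proj x = (2 * m) *s L"
  shows "x \<in> zspan (insert L P)"
  using assms double_proj_in_zspan by (intro in_zspan_L_P_if_double) (simp add: diff_eq_eq)

lemma zspan_glue_eq_UNIV:
  assumes glue: "2 *s w = L + double_proj x0"
  shows "zspan (insert w (insert L P)) = UNIV"
proof -
  have mono: "zspan (insert L P) \<subseteq> int_vec.span (insert w (insert L P))"
    unfolding zspan_eq_span by (rule int_vec.span_mono) blast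
  have "y \<in> int_vec.span (insert w (insert L P))" for y
  proof -
    obtain k where k: "2 *s y - double_proj y = k *s L"
      by (rule double_minus_double_proj_multiple_L)
    show ?thesis
    proof (cases "even k")
      case True
      then show ?thesis
        using k in_zspan_L_P_if_even mono by (blast elim: evenE)
    next
      case False
      then obtain m where m: "k = 2 * m + 1"
        by (blast elim: oddE)
      have "2 *s (y - w) = (2 * m) *s L + (double_proj y - double_proj x0)"
        using k glue m by (auto simp: vec_eq_iff algebra_simps)
      moreover have "double_proj y - double_proj x0 \<in> zspan (range N)"
        using double_proj_in_zspan[of y] double_proj_in_zspan[of x0]
        unfolding zspan_eq_span by (rule int_vec.span_diff)
      ultimately have "y - w \<in> zspan (insert L P)"
        by (rule in_zspan_L_P_if_double)
      then have "w + (y - w) \<in> int_vec.span (insert w (insert L P))"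
        using mono by (intro int_vec.span_add[OF int_vec.span_base]) auto
      then show ?thesis
        by simp
    qed
  qed
  then show ?thesis
    by (auto simp: zspan_eq_span)
qed

lemma glue_not_double:
  assumes "2 *s w = L + v"
  shows "2 *s u \<noteq> v"
proof
  assume "2 *s u = v"
  with assms have "L = 2 *s (w - u)"
    by simp
  with L_not_double show False
    by blast
qed

lemma glue_square_mod_8:
  assumes glue: "2 *s w = L + v" and "v \<in> P"
  shows "(bform G L L + bform G v v) mod 8 = 0"
proof -
  have "4 * bform G w w = bform G (L + v) (L + v)"
    by (simp flip: glue add: bform_scale_left bform_scale_right)
  also have "\<dots> = bform G L L + bform G v v"
    using bform_L_P_eq_0[OF \<open>v \<in> P\<close>] bform_commute[OF symmetric, of v L]
    by (simp add: bform_add_left bform_add_right)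
  finally have "bform G L L + bform G v v = 4 * bform G w w" ..
  moreover obtain c where "bform G w w = 2 * c"
    using even_bform_self[OF symmetric even_diagonal] by (blast elim: evenE)
  ultimately show ?thesis
    by simp
qed

lemma zspan_L_P_or_glue:
  "UNIV = zspan (insert L P)
   \<or> (\<exists>v\<in>P. \<exists>w. 2 *s w = L + v
        \<and> 4 dvd bform G v v
        \<and> (\<forall>i. even (bform G v (N i)))
        \<and> \<not> (\<exists>u\<in>P. 2 *s u = v)
        \<and> (bform G L L + bform G v v) mod 8 = 0
        \<and> UNIV = zspan (insert w (insert L P)))"
proof (cases "\<forall>x. \<exists>m. 2 *s x - double_proj x = (2 * m) *s L")
  case True
  then have "UNIV = zspan (insert L P)"
    using in_zspan_L_P_if_even by blast
  then show ?thesis ..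
next
  case False
  then obtain x0 where not_even: "\<And>m. 2 *s x0 - double_proj x0 \<noteq> (2 * m) *s L"
    by blast
  obtain k where "2 *s x0 - double_proj x0 = k *s L"
    by (rule double_minus_double_proj_multiple_L)
  with not_even obtain m where "2 *s x0 - double_proj x0 = (2 * m + 1) *s L"
    by (metis evenE oddE)
  then have glue: "2 *s (x0 - m *s L) = L + double_proj x0"
    by (auto simp: vec_eq_iff algebra_simps)
  show ?thesis
    using glue four_dvd_bform_double_proj_self bform_double_proj_curve
      glue_not_double[OF glue] glue_square_mod_8[OF glue double_proj_in_P]
      zspan_glue_eq_UNIV[OF glue]
    by (intro disjI2 bexI[OF _ double_proj_in_P] exI[of _ "x0 - m *s L"]) auto
qed

end

theorem proposition3p2:
  fixes G :: "int^9^9" and n :: "8 \<Rightarrow> int^9" and L :: "int^9" and d :: int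
  assumes lattice: "even_lattice_form G"
    and curves: "\<And>i j. bform G (n i) (n j) = (if i = j then -2 else 0)"
    and even_set: "\<exists>\<delta>. (\<Sum>i\<in>UNIV. n i) = 2 *s \<delta>"
    and nikulin: "primitive_closure (range n)
                    = zspan (insert (SOME \<delta>. (\<Sum>i\<in>UNIV. n i) = 2 *s \<delta>) (range n))"
    and L_gen: "orth_compl G (primitive_closure (range n)) = {k *s L | k. True}"
    and L_pos: "bform G L L > 0"
    and d_def: "bform G L L = 2 * d"
  shows "(bform G L L mod 4 = 2 \<longrightarrow>
            UNIV = zspan (insert L (primitive_closure (range n))))
       \<and> (bform G L L mod 4 = 0 \<longrightarrow>
            (UNIV = zspan (insert L (primitive_closure (range n)))
             \<or> (\<exists>v\<in>primitive_closure (range n). \<exists>w.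
                  2 *s w = L + v
                \<and> 4 dvd bform G v v
                \<and> (\<forall>i. even (bform G v (n i)))
                \<and> \<not> (\<exists>u\<in>primitive_closure (range n). 2 *s u = v)
                \<and> (bform G L L + bform G v v) mod 8 = 0
                \<and> UNIV = zspan (insert w (insert L (primitive_closure (range n)))))))"
proof -
  interpret even_set_of_curves G n L
  proof
    show "G$i$j = G$j$i" "even (G$i$i)" for i j
      using lattice by (auto simp: even_lattice_form_def)
    show "orth_compl G (range n) = {k *s L | k. True}"
      using L_gen by (simp add: orth_compl_primitive_closure)
    show "L \<noteq> 0"
      using L_pos by auto
  qed (fact curves even_set)+
  show ?thesis
  proof (cases "UNIV = zspan (insert L P)")
    case True
    then show ?thesis
      by simp
  next
    case False
    with zspan_L_P_or_glue obtain v
      where "4 dvd bform G v v" and "(bform G L L + bform G v v) mod 8 = 0"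
      by (elim disjE bexE exE conjE) simp_all
    then have "bform G L L mod 4 = 0"
      by presburger
    with False zspan_L_P_or_glue show ?thesis
      by simp
  qed
qed

end
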